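(* Let $c\colon[0,1]\to\mathbb{R}^n$ be a continuous curve and let $X$ be an open and dense subset of $\mathbb{R}^n$. Then there exists a dense set $A\subset\mathbb{R}^n$ (in fact a set of second Baire category) such that for each $\alpha\in A$ the set $F_\alpha:=\{t\in[0,1]\,:\, c(t)+\alpha\in X\}$ is open and dense in $[0,1]$. *)

theory Defs
  imports "HOL-Analysis.Analysis"
begin

definition nowhere_dense :: "'a::topological_space set \<Rightarrow> bool" where
  "nowhere_dense S \<longleftrightarrow> interior (closure S) = {}"

text \<open>A set is meager (of first Baire category) if it is contained in a countable
  union of nowhere dense sets; a set of second Baire category is one that is not meager.\<close>
definition meager :: "'a::topological_space set \<Rightarrow> bool" where
  "meager S \<longleftrightarrow> (\<exists>\<F>. countable \<F> \<and> (\<forall>N\<in>\<F>. nowhere_dense N) \<and> S \<subseteq> \<Union>\<F>)"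

end

theory Submission
  imports Defs
begin

text \<open>The set of good translations \<open>\<alpha>\<close> is the countable intersection, over rational
  \<open>q \<in> [0,1]\<close>, of the open dense sets \<open>X - c q\<close>. By Baire it is dense and not meager, and for
  such \<open>\<alpha>\<close> the open set \<open>F\<^sub>\<alpha>\<close> contains every rational of \<open>[0,1]\<close>, hence is dense.\<close>

lemma open_translation_preimage:
  fixes X :: "'a::real_normed_vector set"
  assumes "open X"
  shows "open {\<alpha>. v + \<alpha> \<in> X}"
proof -
  have "{\<alpha>. v + \<alpha> \<in> X} = (+) (- v) ` X"
    by (force simp: image_iff algebra_simps)
  then show ?thesis
    by (metis assms open_translation)
qed

lemma dense_translation_preimage:
  fixes X :: "'a::real_normed_vector set"
  assumes "closure X = UNIV"
  shows "closure {\<alpha>. v + \<alpha> \<in> X} = UNIV"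
proof -
  have "{\<alpha>. v + \<alpha> \<in> X} = (+) (- v) ` X"
    by (force simp: image_iff algebra_simps)
  also have "closure \<dots> = UNIV"
    unfolding closure_translation assms by (simp add: surj_def)
  finally show ?thesis .
qed

lemma openin_translated_preimage:
  fixes c :: "'a::topological_space \<Rightarrow> 'b::real_normed_vector"
  assumes "continuous_on S c" and "open X"
  shows "openin (top_of_set S) {t\<in>S. c t + \<alpha> \<in> X}"
proof -
  have "continuous_on S (\<lambda>t. c t + \<alpha>)"
    using assms(1) by (intro continuous_intros)
  then have "openin (top_of_set S) (S \<inter> (\<lambda>t. c t + \<alpha>) -` X)"
    using assms(2) by (rule continuous_openin_preimage_gen)
  moreover have "S \<inter> (\<lambda>t. c t + \<alpha>) -` X = {t\<in>S. c t + \<alpha> \<in> X}"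
    by auto
  ultimately show ?thesis
    by simp
qed

lemma dense_Inter_countable_open_dense:
  fixes \<G> :: "'a::{real_normed_vector,heine_borel} set set"
  assumes "countable \<G>" and "\<And>T. T \<in> \<G> \<Longrightarrow> open T \<and> closure T = UNIV"
  shows "closure (\<Inter>\<G>) = UNIV"
  using Baire[of UNIV \<G>] assms by auto

lemma not_meager_Inter_countable_open_dense:
  fixes \<G> :: "'a::{real_normed_vector,heine_borel} set set"
  assumes "countable \<G>" and open_dense: "\<And>T. T \<in> \<G> \<Longrightarrow> open T \<and> closure T = UNIV"
  shows "\<not> meager (\<Inter>\<G>)"
proof
  assume "meager (\<Inter>\<G>)"
  then obtain \<F> where "countable \<F>" and nowhere: "\<forall>N\<in>\<F>. nowhere_dense N"
    and cover: "\<Inter>\<G> \<subseteq> \<Union>\<F>"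
    unfolding meager_def by blast
  \<comment> \<open>the complement of the closure of a nowhere dense set is open and dense\<close>
  define \<H> where "\<H> = \<G> \<union> (\<lambda>N. - closure N) ` \<F>"
  have "closure (\<Inter>\<H>) = UNIV"
  proof (rule dense_Inter_countable_open_dense)
    show "countable \<H>"
      unfolding \<H>_def using \<open>countable \<G>\<close> \<open>countable \<F>\<close> by auto
    show "open T \<and> closure T = UNIV" if "T \<in> \<H>" for T
      using that open_dense nowhere
      by (auto simp: \<H>_def closure_complement nowhere_dense_def)
  qed
  then obtain x where x: "x \<in> \<Inter>\<H>"
    by (metis UNIV_not_empty closure_empty equals0I)
  then obtain N where "N \<in> \<F>" "x \<in> N"
    using cover by (auto simp: \<H>_def)
  moreover have "x \<notin> closure N"
    using x \<open>N \<in> \<F>\<close> by (auto simp: \<H>_def)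
  ultimately show False
    using closure_subset by blast
qed

lemma closure_Rats_Int_atLeastAtMost:
  fixes a b :: real
  assumes "a < b"
  shows "closure (\<rat> \<inter> {a..b}) = {a..b}"
proof
  show "closure (\<rat> \<inter> {a..b}) \<subseteq> {a..b}"
    by (simp add: closure_minimal)
  have "{a<..<b} \<subseteq> closure ({a<..<b} \<inter> \<rat>)"
    using open_Int_closure_subset[of "{a<..<b}" \<rat>] by (simp add: Rats_closure_real)
  also have "\<dots> \<subseteq> closure (\<rat> \<inter> {a..b})"
    by (intro closure_mono) auto
  finally have "closure {a<..<b} \<subseteq> closure (\<rat> \<inter> {a..b})"
    by (simp add: closure_minimal)
  then show "{a..b} \<subseteq> closure (\<rat> \<inter> {a..b})"
    using assms by simp
qed

theorem lemma2p1:
  fixes c :: "real \<Rightarrow> real ^ 'n" and X :: "(real ^ 'n) set"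
  assumes "continuous_on {0..1} c"
    and "open X" and "closure X = UNIV"
  shows "\<exists>A :: (real ^ 'n) set. closure A = UNIV \<and> \<not> meager A \<and>
           (\<forall>\<alpha>\<in>A. openin (top_of_set {0..1}) {t\<in>{0..1}. c t + \<alpha> \<in> X} \<and>
                    {0..1} \<subseteq> closure {t\<in>{0..1}. c t + \<alpha> \<in> X})"
proof -
  define \<G> where "\<G> = (\<lambda>q. {\<alpha>. c q + \<alpha> \<in> X}) ` (\<rat> \<inter> {0..1})"
  have "countable \<G>"
    unfolding \<G>_def using countable_rat by blast
  moreover have "open T \<and> closure T = UNIV" if "T \<in> \<G>" for T
    using that open_translation_preimage[OF assms(2)] dense_translation_preimage[OF assms(3)]
    by (auto simp: \<G>_def)
  ultimately have dense: "closure (\<Inter>\<G>) = UNIV" and not_meager: "\<not> meager (\<Inter>\<G>)"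
    using dense_Inter_countable_open_dense not_meager_Inter_countable_open_dense by blast+
  have "openin (top_of_set {0..1}) {t\<in>{0..1}. c t + \<alpha> \<in> X}" for \<alpha>
    using assms(1,2) by (rule openin_translated_preimage)
  moreover have "{0..1} \<subseteq> closure {t\<in>{0..1}. c t + \<alpha> \<in> X}" if "\<alpha> \<in> \<Inter>\<G>" for \<alpha>
  proof -
    have "\<rat> \<inter> {0..1} \<subseteq> {t\<in>{0..1}. c t + \<alpha> \<in> X}"
      using that by (auto simp: \<G>_def)
    then have "closure (\<rat> \<inter> {0..1}) \<subseteq> closure {t\<in>{0..1}. c t + \<alpha> \<in> X}"
      by (rule closure_mono)
    then show ?thesis
      using closure_Rats_Int_atLeastAtMost[of 0 1] by simp
  qed
  ultimately show ?thesis
    using dense not_meager by blast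
qed

end
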